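(* Assume condition (PV) holds. Then, locally (for conditioning values $d\in\mathcal{D}(\epsilon)$ and $z\in\mathcal{Z}(\epsilon)$): (a) $Y\perp\!\!\!\perp Z\mid(D,U)$; (b) $W\perp\!\!\!\perp(D,Z)\mid U$. If in addition $\eta_a\perp\!\!\!\perp U\mid D=d$ for all $d\in\mathcal{D}(\epsilon)$, then also: (c) $A\perp\!\!\!\perp U\mid D$.
   Context: Setting. All random variables live on one probability space. The variables are: - $Y\in\mathbb{R}$, the outcome; - $A\in\{0,1\}$, the treatment; - $D\in\mathbb{R}$, the running variable, with cutoff $d^*$; - $Z$, a placebo treatment, and $W$, a placebo outcome; - $U$, an unobserved confounder; - $\eta_y,\eta_w,\eta_a$, heterogeneity terms. There are structural functions $Y(a,d,z,u,\eta_y)$, $W(a,d,z,u,\eta_w)$ and $A(d,z,u,\eta_a)$, written $Y(a,d,u,\eta_y)$, $W(u,\eta_w)$ and $A(d,\eta_a)$ under exclusion. For $\epsilon>0$, $\mathcal{D}(\epsilon)=(d^*-\epsilon,d^* )\cup(d^*,d^*+\epsilon)$, and $\mathcal{Z}(\epsilon)$ is a set with $P(Z\in\mathcal{Z}(\epsilon)\mid D\in\mathcal{D}(\epsilon))=1$. (PV) There is $\epsilon>0$ such that for all $d\in\mathcal{D}(\epsilon)$ and $z\in\mathcal{Z}(\epsilon)$: (a) if $A=a$, $D=d$, $Z=z$, then $Y=Y(a,d,z,U,\eta_y)$ and $W=W(a,d,z,U,\eta_w)$ a.s.; if $D=d$, $Z=z$, then $A=A(d,z,U,\eta_a)$ a.s.;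 (b) $Z\perp\!\!\!\perp(\eta_y,\eta_a)\mid(U,D)$ and $\eta_w\perp\!\!\!\perp(D,Z)\mid U$; (c) densities exist and $f(a,d,z\mid u)>0$ whenever $f(u)>0$; (d) a.s. $Y(a,d,z,U,\eta_y)=Y(a,d,U,\eta_y)$, $W(a,d,z,U,\eta_w)=W(U,\eta_w)$ and $A(d,z,U,\eta_a)=A(d,\eta_a)$. *)

theory Defs
  imports "HOL-Probability.Probability"
begin

definition cprob :: "'a measure \<Rightarrow> ('a \<Rightarrow> 'c) \<Rightarrow> 'c measure \<Rightarrow> 'a set \<Rightarrow> 'a \<Rightarrow> real" where
  "cprob M Z MZ E = real_cond_exp M (vimage_algebra (space M) Z MZ) (indicator E)"

definition cond_indep ::
  "'a measure \<Rightarrow> 'b measure \<Rightarrow> ('a \<Rightarrow> 'b) \<Rightarrow> 'c measure \<Rightarrow> ('a \<Rightarrow> 'c)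
     \<Rightarrow> 'd measure \<Rightarrow> ('a \<Rightarrow> 'd) \<Rightarrow> bool" where
  "cond_indep M MX X MY Y MZ Z \<longleftrightarrow>
     (\<forall>A\<in>sets MX. \<forall>B\<in>sets MY. AE \<omega> in M.
        cprob M Z MZ ({x\<in>space M. X x \<in> A} \<inter> {x\<in>space M. Y x \<in> B}) \<omega>
        = cprob M Z MZ {x\<in>space M. X x \<in> A} \<omega> * cprob M Z MZ {x\<in>space M. Y x \<in> B} \<omega>)"

definition Dnbhd :: "real \<Rightarrow> real \<Rightarrow> real set" where
  "Dnbhd dstar eps = {dstar - eps <..< dstar} \<union> {dstar <..< dstar + eps}"

definition local_measure :: "'a measure \<Rightarrow> ('a \<Rightarrow> real) \<Rightarrow> real \<Rightarrow> real \<Rightarrow> 'a measure" where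
  "local_measure M D dstar eps = uniform_measure M {\<omega>\<in>space M. D \<omega> \<in> Dnbhd dstar eps}"

end

theory Submission
  imports Defs
begin

text \<open>On the region \<open>D \<in> D(\<epsilon>)\<close> the structural equations and the exclusion
  restrictions make \<open>Y\<close> a measurable function of \<open>((\<eta>\<^sub>y, \<eta>\<^sub>a), (U, D))\<close>,
  \<open>W\<close> one of \<open>(\<eta>\<^sub>w, U)\<close> and \<open>A\<close> one of \<open>(\<eta>\<^sub>a, D)\<close>, almost surely.
  The three claims then follow from the assumed conditional independences, because
  \<open>X \<perp> V | C\<close> implies \<open>X \<perp> g(V, C) | C\<close> for every measurable \<open>g\<close>, by a
  Dynkin-system argument over the measurable rectangles of \<open>(V, C)\<close>.\<close>

text \<open>\<open>E[f | F]\<close> remains a conditional expectation of \<open>f\<close> on \<open>E\<close>: for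
  \<open>f = 1\<^sub>S\<close> this is equivalent to the product rule for \<open>S\<close> and \<open>E\<close> given \<open>F\<close>
  (lemma \<open>cond_exp_stable_on_iff\<close>), but unlike the product rule it is closed under
  complements and countable disjoint unions of \<open>E\<close>.\<close>
definition cond_exp_stable_on ::
    "'a measure \<Rightarrow> 'a measure \<Rightarrow> ('a \<Rightarrow> real) \<Rightarrow> 'a set \<Rightarrow> bool" where
  "cond_exp_stable_on M F f E \<longleftrightarrow> (\<forall>G\<in>sets F.
     (\<integral>x\<in>E. indicator G x * f x \<partial>M) = (\<integral>x\<in>E. indicator G x * real_cond_exp M F f x \<partial>M))"

lemma set_integral_space_Diff:
  fixes h :: "'a \<Rightarrow> real"
  assumes h: "integrable M h" and E: "E \<in> sets M"
  shows "(\<integral>x\<in>space M - E. h x \<partial>M) = (\<integral>x. h x \<partial>M) - (\<integral>x\<in>E. h x \<partial>M)"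
proof -
  have "(\<integral>x\<in>space M - E. h x \<partial>M) = (\<integral>x. h x - indicator E x * h x \<partial>M)"
    unfolding set_lebesgue_integral_def
    by (rule Bochner_Integration.integral_cong) (auto split: split_indicator)
  also have "\<dots> = (\<integral>x. h x \<partial>M) - (\<integral>x\<in>E. h x \<partial>M)"
    unfolding set_lebesgue_integral_def using h integrable_mult_indicator[OF E h] by simp
  finally show ?thesis .
qed

context finite_measure_subalgebra
begin

lemma sets_F_subset: "G \<in> sets F \<Longrightarrow> G \<in> sets M"
  using subalg by (auto simp: subalgebra_def)

lemma set_integral_eq_cond_exp_mult_indicator:
  assumes f: "integrable M f" and E: "E \<in> sets M" and G: "G \<in> sets F"
  shows "(\<integral>x\<in>E. indicator G x * f x \<partial>M)
    = (\<integral>x. indicator G x * real_cond_exp M F (\<lambda>x. f x * indicator E x) x \<partial>M)"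
proof -
  have "integrable M (\<lambda>x. indicator G x * (f x * indicator E x))"
    using integrable_mult_indicator[OF sets_F_subset[OF G] integrable_mult_indicator[OF E f]]
    by (simp add: ac_simps)
  then have "(\<integral>x. indicator G x * real_cond_exp M F (\<lambda>x. f x * indicator E x) x \<partial>M)
      = (\<integral>x. indicator G x * (f x * indicator E x) \<partial>M)"
    by (rule real_cond_exp_intg(2)) (use f E G in simp_all)
  then show ?thesis unfolding set_lebesgue_integral_def by (simp add: ac_simps)
qed

lemma set_integral_eq_mult_cond_prob:
  assumes g: "integrable M g" "g \<in> borel_measurable F" and E: "E \<in> sets M" and G: "G \<in> sets F"
  shows "(\<integral>x\<in>E. indicator G x * g x \<partial>M)
    = (\<integral>x. indicator G x * (g x * real_cond_exp M F (indicator E) x) \<partial>M)"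
proof -
  have "integrable M (\<lambda>x. (indicator G x * g x) * indicator E x)"
    using integrable_mult_indicator[OF E integrable_mult_indicator[OF sets_F_subset[OF G] g(1)]]
    by (simp add: ac_simps)
  then have "(\<integral>x. (indicator G x * g x) * real_cond_exp M F (indicator E) x \<partial>M)
      = (\<integral>x. (indicator G x * g x) * indicator E x \<partial>M)"
    by (rule real_cond_exp_intg(2)) (use g E G in simp_all)
  then show ?thesis unfolding set_lebesgue_integral_def by (simp add: ac_simps)
qed

lemma cond_exp_stable_on_empty: "cond_exp_stable_on M F f {}"
  by (simp add: cond_exp_stable_on_def set_lebesgue_integral_def)

lemma cond_exp_stable_on_Diff:
  assumes f: "integrable M f" and E: "E \<in> sets M" and stable: "cond_exp_stable_on M F f E"
  shows "cond_exp_stable_on M F f (space M - E)"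
  unfolding cond_exp_stable_on_def
proof
  fix G assume G: "G \<in> sets F"
  have int_f: "integrable M (\<lambda>x. indicator G x * f x)"
    using integrable_mult_indicator[OF sets_F_subset[OF G] f] by simp
  have int_ce: "integrable M (\<lambda>x. indicator G x * real_cond_exp M F f x)"
    by (rule real_cond_exp_intg(1)) (use int_f G borel_measurable_integrable[OF f] in simp_all)
  have "(\<integral>x. indicator G x * real_cond_exp M F f x \<partial>M) = (\<integral>x. indicator G x * f x \<partial>M)"
    by (rule real_cond_exp_intg(2)) (use int_f G borel_measurable_integrable[OF f] in simp_all)
  then show "(\<integral>x\<in>space M - E. indicator G x * f x \<partial>M)
      = (\<integral>x\<in>space M - E. indicator G x * real_cond_exp M F f x \<partial>M)"
    using stable G
    by (simp add: set_integral_space_Diff[OF int_f E] set_integral_space_Diff[OF int_ce E]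
        cond_exp_stable_on_def)
qed

lemma cond_exp_stable_on_disjoint_UN:
  assumes f: "integrable M f" and E: "\<And>i. E i \<in> sets M" and disj: "disjoint_family E"
    and stable: "\<And>i. cond_exp_stable_on M F f (E i)"
  shows "cond_exp_stable_on M F f (\<Union>i::nat. E i)"
  unfolding cond_exp_stable_on_def
proof
  fix G assume G: "G \<in> sets F"
  have UN_E: "(\<Union>i. E i) \<in> sets M" using E by blast
  have int_f: "integrable M (\<lambda>x. indicator G x * f x)"
    using integrable_mult_indicator[OF sets_F_subset[OF G] f] by simp
  have int_ce: "integrable M (\<lambda>x. indicator G x * real_cond_exp M F f x)"
    by (rule real_cond_exp_intg(1)) (use int_f G borel_measurable_integrable[OF f] in simp_all)
  have "(\<integral>x\<in>(\<Union>i. E i). indicator G x * f x \<partial>M) = (\<Sum>i. \<integral>x\<in>E i. indicator G x * f x \<partial>M)"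
    using E disj integrable_mult_indicator[OF UN_E int_f]
    by (intro lebesgue_integral_countable_add) (auto simp: disjoint_family_on_def set_integrable_def)
  also have "\<dots> = (\<Sum>i. \<integral>x\<in>E i. indicator G x * real_cond_exp M F f x \<partial>M)"
    using stable G by (simp add: cond_exp_stable_on_def)
  also have "\<dots> = (\<integral>x\<in>(\<Union>i. E i). indicator G x * real_cond_exp M F f x \<partial>M)"
    using E disj integrable_mult_indicator[OF UN_E int_ce]
    by (intro lebesgue_integral_countable_add[symmetric])
      (auto simp: disjoint_family_on_def set_integrable_def)
  finally show "(\<integral>x\<in>(\<Union>i. E i). indicator G x * f x \<partial>M)
      = (\<integral>x\<in>(\<Union>i. E i). indicator G x * real_cond_exp M F f x \<partial>M)" .
qed

lemma cond_exp_stable_on_Int: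
  assumes stable: "cond_exp_stable_on M F f E" and B: "B \<in> sets F"
  shows "cond_exp_stable_on M F f (E \<inter> B)"
  unfolding cond_exp_stable_on_def
proof
  fix G assume "G \<in> sets F"
  then have "G \<inter> B \<in> sets F" using B by blast
  with stable have "(\<integral>x\<in>E. indicator (G \<inter> B) x * f x \<partial>M)
      = (\<integral>x\<in>E. indicator (G \<inter> B) x * real_cond_exp M F f x \<partial>M)"
    unfolding cond_exp_stable_on_def by blast
  then show "(\<integral>x\<in>E \<inter> B. indicator G x * f x \<partial>M)
      = (\<integral>x\<in>E \<inter> B. indicator G x * real_cond_exp M F f x \<partial>M)"
    unfolding set_lebesgue_integral_def by (simp add: indicator_inter_arith ac_simps)
qed

lemma cond_exp_stable_on_iff:
  assumes f: "integrable M f" and E: "E \<in> sets M"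
  shows "cond_exp_stable_on M F f E \<longleftrightarrow>
    (AE x in M. real_cond_exp M F (\<lambda>x. f x * indicator E x) x
                = real_cond_exp M F f x * real_cond_exp M F (indicator E) x)"
    (is "_ \<longleftrightarrow> (AE x in M. ?q x = ?c x * ?p x)")
proof -
  have c: "integrable M ?c" "?c \<in> borel_measurable F"
    using real_cond_exp_int(1)[OF f] by simp_all
  have stable_iff: "cond_exp_stable_on M F f E \<longleftrightarrow>
      (\<forall>G\<in>sets F. (\<integral>x. indicator G x * ?q x \<partial>M) = (\<integral>x. indicator G x * (?c x * ?p x) \<partial>M))"
    unfolding cond_exp_stable_on_def
    by (simp add: set_integral_eq_cond_exp_mult_indicator[OF f E]
        set_integral_eq_mult_cond_prob[OF c E])
  have fE: "integrable M (\<lambda>x. f x * indicator E x)"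
    using integrable_mult_indicator[OF E f] by (simp add: mult.commute)
  have cp: "integrable M (\<lambda>x. ?c x * ?p x)"
    using integrable_mult_indicator[OF E c(1)]
    by (intro real_cond_exp_intg(1)) (use E in \<open>simp_all add: mult.commute\<close>)
  show ?thesis
  proof
    assume "cond_exp_stable_on M F f E"
    then have "(\<integral>x\<in>G. f x * indicator E x \<partial>M) = (\<integral>x\<in>G. ?c x * ?p x \<partial>M)" if "G \<in> sets F" for G
      using that real_cond_exp_intA[OF fE that] unfolding stable_iff set_lebesgue_integral_def by simp
    then show "AE x in M. ?q x = ?c x * ?p x"
      by (intro real_cond_exp_charact fE cp) (simp, use c(2) in measurable)
  next
    assume product: "AE x in M. ?q x = ?c x * ?p x"
    have "(\<integral>x. indicator G x * ?q x \<partial>M) = (\<integral>x. indicator G x * (?c x * ?p x) \<partial>M)"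
      if "G \<in> sets F" for G
    proof -
      have [measurable]: "G \<in> sets M" using sets_F_subset[OF that] .
      show ?thesis by (rule integral_cong_AE) (measurable, measurable, use product in auto)
    qed
    then show "cond_exp_stable_on M F f E"
      unfolding stable_iff by simp
  qed
qed

end

lemma finite_measure_subalgebra_vimage_algebra:
  assumes "finite_measure N" and "W \<in> measurable N MW"
  shows "finite_measure_subalgebra N (vimage_algebra (space N) W MW)"
proof -
  interpret finite_measure N by fact
  show ?thesis
    by unfold_locales
      (use assms(2) measurable_iff_sets[of W N MW] in \<open>auto simp: subalgebra_def\<close>)
qed

lemma cond_indep_sym:
  "cond_indep N MX X MY Y MZ Z \<Longrightarrow> cond_indep N MY Y MX X MZ Z"
  unfolding cond_indep_def by (simp add: Int_commute mult.commute)

lemma cond_indep_fun_pair: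
  assumes N: "finite_measure N"
    and [measurable]: "X \<in> measurable N MX" "V \<in> measurable N MV" "W \<in> measurable N MW"
      "g \<in> measurable (MV \<Otimes>\<^sub>M MW) MG"
    and ci: "cond_indep N MX X MV V MW W"
  shows "cond_indep N MX X MG (\<lambda>x. g (V x, W x)) MW W"
proof -
  define F where "F = vimage_algebra (space N) W MW"
  interpret finite_measure_subalgebra N F
    unfolding F_def by (rule finite_measure_subalgebra_vimage_algebra[OF N]) measurable
  have indicator_Int: "(\<lambda>x. indicator S x * indicator E x) = (indicator (S \<inter> E) :: _ \<Rightarrow> real)"
    for S E :: "'a set"
    by (simp add: fun_eq_iff indicator_inter_arith)
  show ?thesis
    unfolding cond_indep_def cprob_def F_def[symmetric]
  proof (intro ballI)
    fix A C assume [measurable]: "A \<in> sets MX" "C \<in> sets MG"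
    define SX where "SX = {x\<in>space N. X x \<in> A}"
    have [measurable]: "SX \<in> sets N" unfolding SX_def by measurable
    have SX_int: "integrable N (indicator SX :: _ \<Rightarrow> real)"
      by (simp add: less_top[symmetric])
    define ES where "ES S = {x\<in>space N. (V x, W x) \<in> S}" for S
    have ES_sets: "ES S \<in> sets N" if "S \<in> sets (MV \<Otimes>\<^sub>M MW)" for S
      unfolding ES_def using that by measurable
    have stable_ES: "cond_exp_stable_on N F (indicator SX) (ES S)" if "S \<in> sets (MV \<Otimes>\<^sub>M MW)" for S
      using Int_stable_pair_measure_generator pair_measure_closed that unfolding sets_pair_measure
    proof (induct rule: sigma_sets_induct_disjoint)
      case (basic S)
      then obtain a b where S: "S = a \<times> b" and [measurable]: "a \<in> sets MV" "b \<in> sets MW" by auto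
      define EV where "EV = {x\<in>space N. V x \<in> a}"
      have EV_sets[measurable]: "EV \<in> sets N" unfolding EV_def by measurable
      have "cond_exp_stable_on N F (indicator SX) EV"
        using ci[unfolded cond_indep_def cprob_def F_def[symmetric], rule_format, of A a]
        unfolding cond_exp_stable_on_iff[OF SX_int EV_sets] indicator_Int by (simp add: SX_def EV_def)
      then have "cond_exp_stable_on N F (indicator SX) (EV \<inter> (W -` b \<inter> space N))"
        by (rule cond_exp_stable_on_Int) (simp add: F_def in_vimage_algebra)
      moreover have "ES S = EV \<inter> (W -` b \<inter> space N)"
        unfolding ES_def EV_def S by auto
      ultimately show ?case by simp
    next
      case empty
      show ?case by (simp add: ES_def cond_exp_stable_on_empty)
    next
      case (compl S)
      have "ES (space MV \<times> space MW - S) = space N - ES S"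
        unfolding ES_def using measurable_space[of V N MV] measurable_space[of W N MW] by auto
      then show ?case
        using compl by (simp add: cond_exp_stable_on_Diff SX_int ES_sets sets_pair_measure)
    next
      case (union S)
      have "ES (\<Union>i. S i) = (\<Union>i. ES (S i))" unfolding ES_def by auto
      moreover have "disjoint_family (\<lambda>i. ES (S i))"
        using union(1) unfolding ES_def disjoint_family_on_def by auto
      then have "cond_exp_stable_on N F (indicator SX) (\<Union>i. ES (S i))"
        using union(2,3) by (intro cond_exp_stable_on_disjoint_UN SX_int ES_sets)
          (auto simp: sets_pair_measure)
      ultimately show ?case by simp
    qed
    define EG where "EG = {x\<in>space N. g (V x, W x) \<in> C}"
    have EG_sets: "EG \<in> sets N" unfolding EG_def by measurable
    have ES_EG: "ES (g -` C \<inter> space (MV \<Otimes>\<^sub>M MW)) = EG"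
      unfolding ES_def EG_def using measurable_space[of V N MV] measurable_space[of W N MW]
      by (auto simp: space_pair_measure)
    have "cond_exp_stable_on N F (indicator SX) EG"
      using stable_ES[of "g -` C \<inter> space (MV \<Otimes>\<^sub>M MW)"] unfolding ES_EG by measurable
    then show "AE x in N.
        real_cond_exp N F (indicator ({x\<in>space N. X x \<in> A} \<inter> {x\<in>space N. g (V x, W x) \<in> C})) x
        = real_cond_exp N F (indicator {x\<in>space N. X x \<in> A}) x
          * real_cond_exp N F (indicator {x\<in>space N. g (V x, W x) \<in> C}) x"
      unfolding cond_exp_stable_on_iff[OF SX_int EG_sets] indicator_Int by (simp add: SX_def EG_def)
  qed
qed

lemma cond_indep_AE_cong:
  assumes N: "finite_measure N"
    and [measurable]: "X \<in> measurable N MX" "Y \<in> measurable N MY" "Y' \<in> measurable N MY"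
      "Z \<in> measurable N MZ"
    and Y_eq: "AE x in N. Y x = Y' x" and ci: "cond_indep N MX X MY Y MZ Z"
  shows "cond_indep N MX X MY Y' MZ Z"
proof -
  define F where "F = vimage_algebra (space N) Z MZ"
  interpret finite_measure_subalgebra N F
    unfolding F_def by (rule finite_measure_subalgebra_vimage_algebra[OF N]) measurable
  have cong: "AE x in N. real_cond_exp N F (indicator (E \<inter> {x\<in>space N. Y' x \<in> B})) x
      = real_cond_exp N F (indicator (E \<inter> {x\<in>space N. Y x \<in> B})) x"
    if [measurable]: "E \<in> sets N" "B \<in> sets MY" for E B
    by (rule real_cond_exp_cong)
      (use Y_eq in \<open>eventually_elim, auto split: split_indicator\<close>, measurable, measurable)
  show ?thesis
    unfolding cond_indep_def cprob_def F_def[symmetric]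
  proof (intro ballI)
    fix A B assume A[measurable]: "A \<in> sets MX" and B[measurable]: "B \<in> sets MY"
    have XA: "{x\<in>space N. X x \<in> A} \<in> sets N" by measurable
    show "AE x in N. real_cond_exp N F (indicator ({x\<in>space N. X x \<in> A} \<inter> {x\<in>space N. Y' x \<in> B})) x
        = real_cond_exp N F (indicator {x\<in>space N. X x \<in> A}) x
          * real_cond_exp N F (indicator {x\<in>space N. Y' x \<in> B}) x"
      using ci[unfolded cond_indep_def cprob_def F_def[symmetric], rule_format, OF A B]
        cong[OF XA B] cong[OF sets.top B]
      by eventually_elim (simp add: Int_absorb1)
  qed
qed

lemma cond_indep_AE_eq_fun_pair:
  assumes N: "finite_measure N"
    and [measurable]: "X \<in> measurable N MX" "V \<in> measurable N MV" "W \<in> measurable N MW"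
      "g \<in> measurable (MV \<Otimes>\<^sub>M MW) MG" "Y \<in> measurable N MG"
    and Y_eq: "AE x in N. Y x = g (V x, W x)" and ci: "cond_indep N MX X MV V MW W"
  shows "cond_indep N MX X MG Y MW W"
proof (rule cond_indep_AE_cong[OF N])
  show "cond_indep N MX X MG (\<lambda>x. g (V x, W x)) MW W"
    by (rule cond_indep_fun_pair[OF N _ _ _ _ ci]) measurable
  show "AE x in N. g (V x, W x) = Y x" using Y_eq by auto
qed measurable

lemma vimage_pair_swap_subset:
  "{(\<lambda>x. (U x, D x)) -` S \<inter> \<Omega> | S. S \<in> sets (MU \<Otimes>\<^sub>M MD)}
     \<subseteq> {(\<lambda>x. (D x, U x)) -` S \<inter> \<Omega> | S. S \<in> sets (MD \<Otimes>\<^sub>M MU)}"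
proof clarify
  fix S assume S: "S \<in> sets (MU \<Otimes>\<^sub>M MD)"
  let ?S' = "(\<lambda>(d, u). (u, d)) -` S \<inter> space (MD \<Otimes>\<^sub>M MU)"
  have "?S' \<in> sets (MD \<Otimes>\<^sub>M MU)" by (rule measurable_sets[OF measurable_pair_swap' S])
  moreover have "(\<lambda>x. (U x, D x)) -` S \<inter> \<Omega> = (\<lambda>x. (D x, U x)) -` ?S' \<inter> \<Omega>"
    using sets.sets_into_space[OF S] by (auto simp: space_pair_measure)
  ultimately show "\<exists>S'. (\<lambda>x. (U x, D x)) -` S \<inter> \<Omega> = (\<lambda>x. (D x, U x)) -` S' \<inter> \<Omega>
      \<and> S' \<in> sets (MD \<Otimes>\<^sub>M MU)" by (intro exI[of _ ?S'] conjI)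
qed

lemma cond_indep_swap_cond:
  assumes "cond_indep N MX X MY Y (MU \<Otimes>\<^sub>M MD) (\<lambda>x. (U x, D x))"
  shows "cond_indep N MX X MY Y (MD \<Otimes>\<^sub>M MU) (\<lambda>x. (D x, U x))"
proof -
  have "{(\<lambda>x. (U x, D x)) -` S \<inter> space N | S. S \<in> sets (MU \<Otimes>\<^sub>M MD)}
      = {(\<lambda>x. (D x, U x)) -` S \<inter> space N | S. S \<in> sets (MD \<Otimes>\<^sub>M MU)}"
    by (rule subset_antisym[OF vimage_pair_swap_subset vimage_pair_swap_subset])
  then show ?thesis
    using assms unfolding cond_indep_def cprob_def vimage_algebra_def by simp
qed

lemma finite_measure_uniform_measure:
  assumes "finite_measure M" and A: "A \<in> sets M"
  shows "finite_measure (uniform_measure M A)"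
proof (cases "emeasure M A = 0")
  case True
  then show ?thesis
    by (intro finite_measureI) (simp add: A divide_ennreal_def)
next
  case False
  then show ?thesis
    using finite_measure.emeasure_finite[OF assms(1)]
    by (intro prob_space.finite_measure prob_space_uniform_measure) auto
qed

lemma sets_local_measure [simp, measurable_cong]: "sets (local_measure M D dstar eps) = sets M"
  by (simp add: local_measure_def)

lemma finite_measure_local_measure:
  assumes "finite_measure M" and "D \<in> borel_measurable M"
  shows "finite_measure (local_measure M D dstar eps)"
  unfolding local_measure_def using assms
  by (intro finite_measure_uniform_measure) (auto simp: Dnbhd_def)

lemma AE_local_measureI:
  assumes "D \<in> borel_measurable M" and "AE \<omega> in M. D \<omega> \<in> Dnbhd dstar eps \<longrightarrow> P \<omega>"
  shows "AE \<omega> in local_measure M D dstar eps. P \<omega>"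
  unfolding local_measure_def using assms
  by (intro AE_uniform_measureI) (auto simp: Dnbhd_def)

lemma reduced_form_AE:
  assumes A01: "\<forall>\<omega>\<in>space M. A \<omega> \<in> {0, 1}"
    and Z: "AE \<omega> in M. D \<omega> \<in> Dset \<longrightarrow> Z \<omega> \<in> Zset"
    and Y: "AE \<omega> in M. D \<omega> \<in> Dset \<and> Z \<omega> \<in> Zset \<longrightarrow> Y \<omega> = Yf (A \<omega>) (D \<omega>) (Z \<omega>) (U \<omega>) (ey \<omega>)"
    and W: "AE \<omega> in M. D \<omega> \<in> Dset \<and> Z \<omega> \<in> Zset \<longrightarrow> W \<omega> = Wf (A \<omega>) (D \<omega>) (Z \<omega>) (U \<omega>) (ew \<omega>)"
    and A: "AE \<omega> in M. D \<omega> \<in> Dset \<and> Z \<omega> \<in> Zset \<longrightarrow> A \<omega> = Af (D \<omega>) (Z \<omega>) (U \<omega>) (ea \<omega>)"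
    and Yx: "AE \<omega> in M. \<forall>a\<in>{0, 1}. \<forall>d\<in>Dset. \<forall>z\<in>Zset. Yf a d z (U \<omega>) (ey \<omega>) = Yx a d (U \<omega>) (ey \<omega>)"
    and Wx: "AE \<omega> in M. \<forall>a\<in>{0, 1}. \<forall>d\<in>Dset. \<forall>z\<in>Zset. Wf a d z (U \<omega>) (ew \<omega>) = Wx (U \<omega>) (ew \<omega>)"
    and Ax: "AE \<omega> in M. \<forall>d\<in>Dset. \<forall>z\<in>Zset. Af d z (U \<omega>) (ea \<omega>) = Ax d (ea \<omega>)"
  shows "AE \<omega> in M. D \<omega> \<in> Dset \<longrightarrow> A \<omega> = Ax (D \<omega>) (ea \<omega>)
    \<and> Y \<omega> = Yx (Ax (D \<omega>) (ea \<omega>)) (D \<omega>) (U \<omega>) (ey \<omega>) \<and> W \<omega> = Wx (U \<omega>) (ew \<omega>)"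
  using Z Y W A Yx Wx Ax AE_space
proof eventually_elim
  case (elim \<omega>)
  show ?case
  proof
    assume D: "D \<omega> \<in> Dset"
    then have "Z \<omega> \<in> Zset" and "A \<omega> \<in> {0, 1}" using elim A01 by auto
    with D elim show "A \<omega> = Ax (D \<omega>) (ea \<omega>)
      \<and> Y \<omega> = Yx (Ax (D \<omega>) (ea \<omega>)) (D \<omega>) (U \<omega>) (ey \<omega>) \<and> W \<omega> = Wx (U \<omega>) (ew \<omega>)"
      by metis
  qed
qed

theorem lemma1:
  fixes M :: "'o measure"
    and MU :: "'u measure" and MZ :: "'z measure" and MW :: "'w measure"
    and MEy :: "'ey measure" and MEw :: "'ew measure" and MEa :: "'ea measure"
    and Y :: "'o \<Rightarrow> real" and A :: "'o \<Rightarrow> nat" and D :: "'o \<Rightarrow> real"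
    and Z :: "'o \<Rightarrow> 'z" and W :: "'o \<Rightarrow> 'w" and U :: "'o \<Rightarrow> 'u"
    and ey :: "'o \<Rightarrow> 'ey" and ew :: "'o \<Rightarrow> 'ew" and ea :: "'o \<Rightarrow> 'ea"
    and Yf :: "nat \<Rightarrow> real \<Rightarrow> 'z \<Rightarrow> 'u \<Rightarrow> 'ey \<Rightarrow> real"
    and Wf :: "nat \<Rightarrow> real \<Rightarrow> 'z \<Rightarrow> 'u \<Rightarrow> 'ew \<Rightarrow> 'w"
    and Af :: "real \<Rightarrow> 'z \<Rightarrow> 'u \<Rightarrow> 'ea \<Rightarrow> nat"
    and Yx :: "nat \<Rightarrow> real \<Rightarrow> 'u \<Rightarrow> 'ey \<Rightarrow> real"
    and Wx :: "'u \<Rightarrow> 'ew \<Rightarrow> 'w"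
    and Ax :: "real \<Rightarrow> 'ea \<Rightarrow> nat"
    and dstar eps :: real and Zset :: "'z set"
    and fU :: "'u \<Rightarrow> real" and fc :: "'u \<Rightarrow> nat \<Rightarrow> real \<Rightarrow> 'z \<Rightarrow> real"
  assumes P: "prob_space M"
    and meas_Y: "Y \<in> borel_measurable M"
    and meas_A: "A \<in> measurable M (count_space UNIV)"
    and A01: "\<forall>\<omega>\<in>space M. A \<omega> \<in> {0, 1}"
    and meas_D: "D \<in> borel_measurable M"
    and meas_Z: "Z \<in> measurable M MZ"
    and meas_W: "W \<in> measurable M MW"
    and meas_U: "U \<in> measurable M MU"
    and meas_ey: "ey \<in> measurable M MEy"
    and meas_ew: "ew \<in> measurable M MEw"
    and meas_ea: "ea \<in> measurable M MEa"
    and meas_Yx: "(\<lambda>(a, d, u, e). Yx a d u e)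
                    \<in> borel_measurable (count_space UNIV \<Otimes>\<^sub>M (borel \<Otimes>\<^sub>M (MU \<Otimes>\<^sub>M MEy)))"
    and meas_Wx: "(\<lambda>(u, e). Wx u e) \<in> measurable (MU \<Otimes>\<^sub>M MEw) MW"
    and meas_Ax: "(\<lambda>(d, e). Ax d e) \<in> measurable (borel \<Otimes>\<^sub>M MEa) (count_space UNIV)"
    and eps_pos: "eps > 0"
    and Zset: "Zset \<in> sets MZ"
    and Zset_full: "AE \<omega> in M. D \<omega> \<in> Dnbhd dstar eps \<longrightarrow> Z \<omega> \<in> Zset"
    \<comment> \<open>(PV)(a): structural equations on the local region\<close>
    and PVa_Y: "AE \<omega> in M. D \<omega> \<in> Dnbhd dstar eps \<and> Z \<omega> \<in> Zset \<longrightarrow>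
                  Y \<omega> = Yf (A \<omega>) (D \<omega>) (Z \<omega>) (U \<omega>) (ey \<omega>)"
    and PVa_W: "AE \<omega> in M. D \<omega> \<in> Dnbhd dstar eps \<and> Z \<omega> \<in> Zset \<longrightarrow>
                  W \<omega> = Wf (A \<omega>) (D \<omega>) (Z \<omega>) (U \<omega>) (ew \<omega>)"
    and PVa_A: "AE \<omega> in M. D \<omega> \<in> Dnbhd dstar eps \<and> Z \<omega> \<in> Zset \<longrightarrow>
                  A \<omega> = Af (D \<omega>) (Z \<omega>) (U \<omega>) (ea \<omega>)"
    \<comment> \<open>(PV)(b): local conditional independences\<close>
    and PVb_1: "cond_indep (local_measure M D dstar eps) MZ Z (MEy \<Otimes>\<^sub>M MEa) (\<lambda>\<omega>. (ey \<omega>, ea \<omega>))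
                  (MU \<Otimes>\<^sub>M borel) (\<lambda>\<omega>. (U \<omega>, D \<omega>))"
    and PVb_2: "cond_indep (local_measure M D dstar eps) MEw ew (borel \<Otimes>\<^sub>M MZ) (\<lambda>\<omega>. (D \<omega>, Z \<omega>))
                  MU U"
    \<comment> \<open>(PV)(c): densities exist and are positive\<close>
    and PVc_U: "distributed M MU U (\<lambda>u. ennreal (fU u))"
    and PVc_joint: "distributed M (MU \<Otimes>\<^sub>M (count_space UNIV \<Otimes>\<^sub>M (lborel \<Otimes>\<^sub>M MZ)))
                      (\<lambda>\<omega>. (U \<omega>, A \<omega>, D \<omega>, Z \<omega>))
                      (\<lambda>(u, a, d, z). ennreal (fU u * fc u a d z))"
    and PVc_pos: "\<forall>u a d z. fU u > 0 \<and> a \<in> {0, 1} \<and> d \<in> Dnbhd dstar eps \<and> z \<in> Zset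
                      \<longrightarrow> fc u a d z > 0"
    \<comment> \<open>(PV)(d): exclusion restrictions\<close>
    and PVd_Y: "AE \<omega> in M. \<forall>a\<in>{0, 1}. \<forall>d\<in>Dnbhd dstar eps. \<forall>z\<in>Zset.
                  Yf a d z (U \<omega>) (ey \<omega>) = Yx a d (U \<omega>) (ey \<omega>)"
    and PVd_W: "AE \<omega> in M. \<forall>a\<in>{0, 1}. \<forall>d\<in>Dnbhd dstar eps. \<forall>z\<in>Zset.
                  Wf a d z (U \<omega>) (ew \<omega>) = Wx (U \<omega>) (ew \<omega>)"
    and PVd_A: "AE \<omega> in M. \<forall>d\<in>Dnbhd dstar eps. \<forall>z\<in>Zset.
                  Af d z (U \<omega>) (ea \<omega>) = Ax d (ea \<omega>)"
  shows "cond_indep (local_measure M D dstar eps) borel Y MZ Z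
            (borel \<Otimes>\<^sub>M MU) (\<lambda>\<omega>. (D \<omega>, U \<omega>))
         \<and> cond_indep (local_measure M D dstar eps) MW W (borel \<Otimes>\<^sub>M MZ) (\<lambda>\<omega>. (D \<omega>, Z \<omega>))
            MU U
         \<and> (cond_indep (local_measure M D dstar eps) MEa ea MU U borel D
            \<longrightarrow> cond_indep (local_measure M D dstar eps) (count_space UNIV) A MU U borel D)"
proof -
  interpret prob_space M by (rule P)
  let ?L = "local_measure M D dstar eps"
  have L: "finite_measure ?L"
    by (rule finite_measure_local_measure[OF finite_measure_axioms meas_D])
  note [measurable] = meas_Y meas_A meas_D meas_Z meas_W meas_U meas_ey meas_ew meas_ea meas_Wx meas_Ax
  have Y_meas: "(\<lambda>((e, e'), (u, d)). Yx (Ax d e') d u e)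
      \<in> borel_measurable ((MEy \<Otimes>\<^sub>M MEa) \<Otimes>\<^sub>M (MU \<Otimes>\<^sub>M borel))"
    using measurable_compose[OF _ meas_Yx, of "\<lambda>((e, e'), (u, d)). (Ax d e', d, u, e)"]
    by (simp add: case_prod_beta') measurable
  have W_meas: "(\<lambda>(e, u). Wx u e) \<in> measurable (MEw \<Otimes>\<^sub>M MU) MW"
    by measurable
  have A_meas: "(\<lambda>(e, d). Ax d e) \<in> measurable (MEa \<Otimes>\<^sub>M borel) (count_space UNIV)"
    by measurable
  have structural: "AE \<omega> in ?L. A \<omega> = Ax (D \<omega>) (ea \<omega>)
      \<and> Y \<omega> = Yx (Ax (D \<omega>) (ea \<omega>)) (D \<omega>) (U \<omega>) (ey \<omega>) \<and> W \<omega> = Wx (U \<omega>) (ew \<omega>)"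
    by (rule AE_local_measureI[OF meas_D], rule reduced_form_AE)
      (fact A01 Zset_full PVa_Y PVa_W PVa_A PVd_Y PVd_W PVd_A)+
  have "cond_indep ?L MZ Z borel Y (MU \<Otimes>\<^sub>M borel) (\<lambda>\<omega>. (U \<omega>, D \<omega>))"
    by (rule cond_indep_AE_eq_fun_pair[OF L _ _ _ Y_meas _ _ PVb_1])
      (measurable, measurable, measurable, measurable, use structural in auto)
  moreover have "cond_indep ?L (borel \<Otimes>\<^sub>M MZ) (\<lambda>\<omega>. (D \<omega>, Z \<omega>)) MW W MU U"
    by (rule cond_indep_AE_eq_fun_pair[OF L _ _ _ W_meas _ _ cond_indep_sym[OF PVb_2]])
      (measurable, measurable, measurable, measurable, use structural in auto)
  moreover have "cond_indep ?L MU U (count_space UNIV) A borel D"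
    if "cond_indep ?L MEa ea MU U borel D"
    by (rule cond_indep_AE_eq_fun_pair[OF L _ _ _ A_meas _ _ cond_indep_sym[OF that]])
      (measurable, measurable, measurable, measurable, use structural in auto)
  ultimately show ?thesis
    by (blast intro: cond_indep_sym cond_indep_swap_cond)
qed

end
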